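(* Let $n\geq 1$ and let $I$ be a nonempty subset of $[n]$. Then $PC^-_I=\bigcap_{i\in I}PC^-_{\{i\}}$ and $NC^-_I=\bigcap_{i\in I}NC^-_{\{i\}}$.
   Context: Boolean functions on $n$ variables are maps $f:\{0,1\}^n\to\{0,1\}$, variables indexed by $[n]=\{0,\dots,n-1\}$. For a nonempty $I\subseteq[n]$, $f$ is positively canalizing on $I$ if there is a function $\sigma:I\to\{0,1\}$ such that for all $x\in\{0,1\}^n$, if there exists $i\in I$ with $x_i\neq\sigma(i)$ then $f(x)=1$; negatively canalizing on $I$ is defined the same way with $f(x)=0$ in place of $f(x)=1$. $PC^-_I$ (resp. $NC^-_I$) is the set of nonconstant Boolean functions on $n$ variables that are positively (resp. negatively) canalizing on $I$. *)

theory Defs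
  imports Main "HOL-Library.FuncSet"
begin

text \<open>Points of the Boolean cube on n variables indexed by {0..<n}: maps nat => bool
  that are False outside {0..<n}.\<close>

definition cube :: "nat \<Rightarrow> (nat \<Rightarrow> bool) set" where
  "cube n = {x. \<forall>i. n \<le> i \<longrightarrow> x i = False}"

definition boolfun :: "nat \<Rightarrow> ((nat \<Rightarrow> bool) \<Rightarrow> bool) set" where
  "boolfun n = cube n \<rightarrow>\<^sub>E (UNIV :: bool set)"

definition nonconstant :: "nat \<Rightarrow> ((nat \<Rightarrow> bool) \<Rightarrow> bool) \<Rightarrow> bool" where
  "nonconstant n f \<longleftrightarrow> (\<exists>x\<in>cube n. \<exists>y\<in>cube n. f x \<noteq> f y)"

definition canalizing_on :: "nat \<Rightarrow> bool \<Rightarrow> nat set \<Rightarrow> ((nat \<Rightarrow> bool) \<Rightarrow> bool) \<Rightarrow> bool" where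
  "canalizing_on n b I f \<longleftrightarrow>
     (\<exists>\<sigma> :: nat \<Rightarrow> bool. \<forall>x\<in>cube n. (\<exists>i\<in>I. x i \<noteq> \<sigma> i) \<longrightarrow> f x = b)"

definition PCm :: "nat \<Rightarrow> nat set \<Rightarrow> ((nat \<Rightarrow> bool) \<Rightarrow> bool) set" where
  "PCm n I = {f \<in> boolfun n. nonconstant n f \<and> canalizing_on n True I f}"

definition NCm :: "nat \<Rightarrow> nat set \<Rightarrow> ((nat \<Rightarrow> bool) \<Rightarrow> bool) set" where
  "NCm n I = {f \<in> boolfun n. nonconstant n f \<and> canalizing_on n False I f}"

end

theory Submission
  imports Defs
begin

(* Canalizing on I only constrains each coordinate of I separately, so a canalizing
   assignment for I is assembled coordinatewise from canalizing values for the
   singletons {i}, by choice.  Nonemptiness of I is needed only because the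
   intersection over an empty index set is everything. *)

lemma canalizing_on_singleton:
  "canalizing_on n b {i} f \<longleftrightarrow> (\<exists>s. \<forall>x\<in>cube n. x i \<noteq> s \<longrightarrow> f x = b)"
proof
  assume "canalizing_on n b {i} f"
  then obtain \<sigma> where "\<forall>x\<in>cube n. x i \<noteq> \<sigma> i \<longrightarrow> f x = b"
    unfolding canalizing_on_def by auto
  then show "\<exists>s. \<forall>x\<in>cube n. x i \<noteq> s \<longrightarrow> f x = b" by blast
next
  assume "\<exists>s. \<forall>x\<in>cube n. x i \<noteq> s \<longrightarrow> f x = b"
  then obtain s where "\<forall>x\<in>cube n. x i \<noteq> s \<longrightarrow> f x = b" by blast
  then show "canalizing_on n b {i} f"
    unfolding canalizing_on_def by (intro exI[of _ "\<lambda>_. s"]) simp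
qed

lemma canalizing_on_iff_singletons:
  "canalizing_on n b I f \<longleftrightarrow> (\<forall>i\<in>I. canalizing_on n b {i} f)"
proof
  assume "canalizing_on n b I f"
  then obtain \<sigma> where \<sigma>: "\<forall>x\<in>cube n. (\<exists>i\<in>I. x i \<noteq> \<sigma> i) \<longrightarrow> f x = b"
    unfolding canalizing_on_def by blast
  show "\<forall>i\<in>I. canalizing_on n b {i} f"
  proof
    fix i assume "i \<in> I"
    with \<sigma> have "\<forall>x\<in>cube n. x i \<noteq> \<sigma> i \<longrightarrow> f x = b" by blast
    then show "canalizing_on n b {i} f"
      unfolding canalizing_on_singleton by blast
  qed
next
  assume "\<forall>i\<in>I. canalizing_on n b {i} f"
  then have "\<forall>i\<in>I. \<exists>s. \<forall>x\<in>cube n. x i \<noteq> s \<longrightarrow> f x = b"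
    by (simp add: canalizing_on_singleton)
  then obtain \<sigma> where "\<forall>i\<in>I. \<forall>x\<in>cube n. x i \<noteq> \<sigma> i \<longrightarrow> f x = b"
    by (rule bchoice[THEN exE])
  then show "canalizing_on n b I f"
    unfolding canalizing_on_def by (intro exI[of _ \<sigma>]) blast
qed

lemma nonconstant_canalizing_eq_INT_singletons:
  assumes "I \<noteq> {}"
  shows "{f \<in> boolfun n. nonconstant n f \<and> canalizing_on n b I f} =
    (\<Inter>i\<in>I. {f \<in> boolfun n. nonconstant n f \<and> canalizing_on n b {i} f})"
  using assms by (auto simp: canalizing_on_iff_singletons[of n b I])

theorem mainTheorem5:
  fixes n :: nat and I :: "nat set"
  assumes "n \<ge> 1" and "I \<noteq> {}" and "I \<subseteq> {0..<n}"
  shows "PCm n I = (\<Inter>i\<in>I. PCm n {i}) \<and> NCm n I = (\<Inter>i\<in>I. NCm n {i})"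
  unfolding PCm_def NCm_def
  by (intro conjI nonconstant_canalizing_eq_INT_singletons[OF \<open>I \<noteq> {}\<close>])

end
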